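(* Let $q$ be a power of an odd prime $p$ such that $8\mid q-1$ and $\sqrt{2}\in\mathbb{F}_q$, and let $\mathfrak{C}/\mathbb{F}_q$ be the genus $2$ hyperelliptic curve $y^2=x^5+x$. (i) If $p\neq 3,5$, then $\mathrm{Aut}(\mathfrak{C}/\mathbb{F}_q)\simeq\tilde{S}_4$ (in particular $\mathrm{Aut}(\mathfrak{C}/\mathbb{F}_q)=\mathrm{Aut}(\mathfrak{C})$, of order $48$). (ii) If $p=5$, then $\mathrm{Aut}(\mathfrak{C}/\mathbb{F}_q)\simeq\tilde{S}_5$ (in particular $\mathrm{Aut}(\mathfrak{C}/\mathbb{F}_q)=\mathrm{Aut}(\mathfrak{C})$, of order $240$).
   Context: For a genus $2$ curve $\mathfrak{C}:y^2=f(x)$ over $\mathbb{F}_q$ ($q$ odd), automorphisms of $\mathfrak{C}$ over $\overline{\mathbb{F}}_q$ correspond to matrices $M=\begin{pmatrix}a&b\\c&d\end{pmatrix}\in\mathrm{GL}_2(\overline{\mathbb{F}}_q)$ acting by $x\mapsto \frac{ax+b}{cx+d}$, $y\mapsto \frac{(ad-bc)y}{(cx+d)^3}$ (and preserving the curve). $\mathrm{Aut}(\mathfrak{C})$ denotes the full automorphism group over $\overline{\mathbb{F}}_q$ (including the hyperelliptic involution, corresponding to $-I$), and $\mathrm{Aut}(\mathfrak{C}/\mathbb{F}_q)$ its subgroup of automorphisms whose matrix has entries in $\mathbb{F}_q$. $\tilde{S}_4$ denotes the group of order $48$ (a double cover of $S_4$) which is the full automorphism group over $\overline{\mathbb{F}}_p$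 of $y^2=x^5-x$ for $p\neq 2,3,5$; $\tilde{S}_5$ denotes the group of order $240$ which is the full automorphism group over $\overline{\mathbb{F}}_5$ of $y^2=x^5-x$. *)

theory Defs
  imports "HOL-Algebra.Algebraic_Closure_Type" "HOL-Computational_Algebra.Polynomial"
begin

text \<open>A 2x2 matrix (a b; c d) is represented as the tuple (a, b, c, d).\<close>
type_synonym 'k mat2 = "'k \<times> 'k \<times> 'k \<times> 'k"

definition mat2_mult :: "'k::comm_ring_1 mat2 \<Rightarrow> 'k mat2 \<Rightarrow> 'k mat2" where
  "mat2_mult M N = (case M of (a, b, c, d) \<Rightarrow> case N of (a', b', c', d') \<Rightarrow>
     (a*a' + b*c', a*b' + b*d', c*a' + d*c', c*b' + d*d'))"

definition mat2_det :: "'k::comm_ring_1 mat2 \<Rightarrow> 'k" where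
  "mat2_det M = (case M of (a, b, c, d) \<Rightarrow> a*d - b*c)"

text \<open>The matrix M acts by x |-> (ax+b)/(cx+d), y |-> (ad-bc) y/(cx+d)^3.  It maps the
  genus 2 curve y^2 = f(x) (deg f <= 6) to itself iff
  (ad-bc)^2 f(x) = (cx+d)^6 f((ax+b)/(cx+d)) as polynomials, i.e.
  (ad-bc)^2 f = sum_i f_i (ax+b)^i (cx+d)^(6-i).\<close>
definition preserves_curve :: "'k::field poly \<Rightarrow> 'k mat2 \<Rightarrow> bool" where
  "preserves_curve f M = (case M of (a, b, c, d) \<Rightarrow>
     (\<Sum>i\<le>6. smult (coeff f i) ([:b, a:] ^ i * [:d, c:] ^ (6 - i)))
       = smult ((a*d - b*c)^2) f)"

definition curve_aut_set :: "'k::field poly \<Rightarrow> 'k mat2 set" where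
  "curve_aut_set f = {M. mat2_det M \<noteq> 0 \<and> preserves_curve f M}"

definition curve_aut_group :: "'k::field poly \<Rightarrow> 'k mat2 monoid" where
  "curve_aut_group f = \<lparr>carrier = curve_aut_set f, monoid.mult = mat2_mult, one = (1, 0, 0, 1)\<rparr>"

definition mat2_map :: "('k \<Rightarrow> 'l) \<Rightarrow> 'k mat2 \<Rightarrow> 'l mat2" where
  "mat2_map h M = (case M of (a, b, c, d) \<Rightarrow> (h a, h b, h c, h d))"

definition f_plus :: "'k::field poly" where "f_plus = [:0, 1, 0, 0, 0, 1:]"
definition f_minus :: "'k::field poly" where "f_minus = [:0, -1, 0, 0, 0, 1:]"

text \<open>Aut(C) over the algebraic closure of 'k; S4tilde resp. S5tilde is (by the paper's
  definition) the full automorphism group of y^2 = x^5 - x over the algebraic closure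
  of F_p for p not in {2,3,5} resp. p = 5.\<close>
definition Aut_bar :: "'k::field poly \<Rightarrow> 'k alg_closure mat2 monoid" where
  "Aut_bar f = curve_aut_group (map_poly to_ac f)"

end

theory Submission
  imports Defs
begin

(*
  A matrix (a, b, c, d) is an automorphism of y^2 = x^5 + e x iff seven polynomial
  equations in a, b, c, d hold.  Conjugating by diag(1, t) turns solutions for e t^4 into
  solutions for e; since 8 divides q - 1, F_q contains a root z of z^4 = -1, so
  Aut(y^2 = x^5 + x) and Aut(y^2 = x^5 - x) are isomorphic over any extension of F_q.

  Solving the equations explicitly shows that every automorphism over the algebraic
  closure has entries that are polynomials in z and 1/(z - z^3) = 1/sqrt 2, hence lies
  in F_q, and counts them.  Away from characteristics 2 and 5 the solutions of
  y^2 = x^5 + x are the 8 + 8 diagonal and antidiagonal ones and 32 generic ones.  In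
  characteristic 5 the solutions of y^2 = x^5 - x are the multiples l N with N in
  GL_2(F_5) and l^2 = det N, giving 2 |PGL_2(F_5)| = 240.
*)

section \<open>The automorphism equations for \<open>y\<^sup>2 = x\<^sup>5 + e x\<close>\<close>

definition quintic :: "'k::field \<Rightarrow> 'k poly" where
  "quintic e = [:0, e, 0, 0, 0, 1:]"

lemma f_plus_eq_quintic: "f_plus = quintic 1"
  and f_minus_eq_quintic: "f_minus = quintic (-1)"
  unfolding f_plus_def f_minus_def quintic_def by simp_all

text \<open>The coefficients of \<open>x\<^sup>0, \<dots>, x\<^sup>6\<close> in
  \<open>(ax+b)\<^sup>5 (cx+d) + e (ax+b) (cx+d)\<^sup>5 - (ad-bc)\<^sup>2 (x\<^sup>5 + e x)\<close>.\<close>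
definition quintic_aut_eqs :: "'k::field \<Rightarrow> 'k \<Rightarrow> 'k \<Rightarrow> 'k \<Rightarrow> 'k \<Rightarrow> bool" where
  "quintic_aut_eqs e a b c d \<longleftrightarrow>
     b^5*d + e*b*d^5 = 0 \<and>
     b^5*c + 5*a*b^4*d + e*(a*d^5 + 5*b*c*d^4) - e*(a*d - b*c)^2 = 0 \<and>
     5*a*b^4*c + 10*a^2*b^3*d + e*(5*a*c*d^4 + 10*b*c^2*d^3) = 0 \<and>
     10*a^2*b^3*c + 10*a^3*b^2*d + e*(10*a*c^2*d^3 + 10*b*c^3*d^2) = 0 \<and>
     10*a^3*b^2*c + 5*a^4*b*d + e*(10*a*c^3*d^2 + 5*b*c^4*d) = 0 \<and>
     5*a^4*b*c + a^5*d + e*(5*a*c^4*d + b*c^5) - (a*d - b*c)^2 = 0 \<and>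
     a^5*c + e*a*c^5 = 0"

lemma linear_poly_power_5:
  "[:b, a:] ^ 5 = [:b^5, 5*a*b^4, 10*a^2*b^3, 10*a^3*b^2, 5*a^4*b, a^5:]" for a b :: "'k::field"
  by (simp add: numeral_eq_Suc algebra_simps)

lemma preserves_quintic_iff:
  "preserves_curve (quintic e) (a, b, c, d) \<longleftrightarrow> quintic_aut_eqs e a b c d"
proof -
  have "preserves_curve (quintic e) (a, b, c, d) \<longleftrightarrow>
      [:b, a:] ^ 5 * [:d, c:] + smult e ([:b, a:] * [:d, c:] ^ 5)
        - smult ((a*d - b*c)^2) (quintic e) = 0"
    unfolding preserves_curve_def quintic_def
    by (simp add: atMost_Suc numeral_eq_Suc add.commute del: power_Suc)
  also have "\<dots> \<longleftrightarrow> quintic_aut_eqs e a b c d"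
    unfolding quintic_aut_eqs_def linear_poly_power_5 quintic_def by (simp add: algebra_simps)
  finally show ?thesis .
qed

lemma mem_curve_aut_set_quintic:
  "(a, b, c, d) \<in> curve_aut_set (quintic e) \<longleftrightarrow> a*d - b*c \<noteq> 0 \<and> quintic_aut_eqs e a b c d"
  unfolding curve_aut_set_def mat2_det_def by (simp add: preserves_quintic_iff)

text \<open>Equation \<open>k\<close> on the left is \<open>t\<^sup>5\<^sup>-\<^sup>k\<close> times equation \<open>k\<close> on the right
  (for \<open>k = 6\<close> the other way round).\<close>
lemma quintic_aut_eqs_rescale:
  fixes t e a b c d :: "'k::field"
  assumes "t \<noteq> 0"
  shows "quintic_aut_eqs (e * t^4) a (t*b) c d \<longleftrightarrow> quintic_aut_eqs e a b (c*t) d"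
proof -
  have cancel: "x = t^k * y \<Longrightarrow> x = 0 \<longleftrightarrow> y = 0" "y = t^k * x \<Longrightarrow> x = 0 \<longleftrightarrow> y = 0"
    for x y :: 'k and k
    using assms by simp_all
  show ?thesis
    unfolding quintic_aut_eqs_def
    apply (rule arg_cong2[where f=conj], rule cancel(1)[where k=5], Groebner_Basis.algebra)
    apply (rule arg_cong2[where f=conj], rule cancel(1)[where k=4], Groebner_Basis.algebra)
    apply (rule arg_cong2[where f=conj], rule cancel(1)[where k=3], Groebner_Basis.algebra)
    apply (rule arg_cong2[where f=conj], rule cancel(1)[where k=2], Groebner_Basis.algebra)
    apply (rule arg_cong2[where f=conj], rule cancel(1)[where k=1], Groebner_Basis.algebra)
    apply (rule arg_cong2[where f=conj], rule cancel(1)[where k=0], Groebner_Basis.algebra)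
    by (rule cancel(2)[where k=1], Groebner_Basis.algebra)
qed

section \<open>Twisting\<close>

text \<open>Conjugation by \<open>diag(1, t)\<close>.\<close>
definition twist :: "'k::field \<Rightarrow> 'k mat2 \<Rightarrow> 'k mat2" where
  "twist t M = (case M of (a, b, c, d) \<Rightarrow> (a, b/t, c*t, d))"

lemma twist_twist_inverse: "t \<noteq> 0 \<Longrightarrow> twist (1/t) (twist t M) = M"
  unfolding twist_def by (cases M) simp

lemma twist_mult: "t \<noteq> 0 \<Longrightarrow> twist t (mat2_mult M N) = mat2_mult (twist t M) (twist t N)"
  unfolding twist_def mat2_mult_def by (cases M; cases N) (simp add: field_simps)

lemma twist_mem_curve_aut_set:
  fixes t :: "'k::field"
  assumes "t \<noteq> 0" and "M \<in> curve_aut_set (quintic (e * t^4))"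
  shows "twist t M \<in> curve_aut_set (quintic e)"
proof -
  obtain a b c d where M: "M = (a, b, c, d)" by (cases M)
  have "a*d - (b/t)*(c*t) = a*d - b*c" and b: "t * (b/t) = b" using assms(1) by simp_all
  moreover have "quintic_aut_eqs e a (b/t) (c*t) d"
    using assms quintic_aut_eqs_rescale[OF assms(1), of e a "b/t" c d]
    unfolding M mem_curve_aut_set_quintic b by simp
  ultimately show ?thesis
    using assms(2) unfolding M twist_def by (simp add: mem_curve_aut_set_quintic)
qed

lemma bij_betw_twist:
  fixes t :: "'k::field"
  assumes "t \<noteq> 0"
  shows "bij_betw (twist t) (curve_aut_set (quintic (e * t^4))) (curve_aut_set (quintic e))"
proof (rule bij_betwI[where g = "twist (1/t)"])
  have "e * t^4 * (1/t)^4 = e" using assms by (simp add: field_simps)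
  show "twist t \<in> curve_aut_set (quintic (e * t^4)) \<rightarrow> curve_aut_set (quintic e)"
    using twist_mem_curve_aut_set assms by blast
  show "twist (1/t) \<in> curve_aut_set (quintic e) \<rightarrow> curve_aut_set (quintic (e * t^4))"
    using twist_mem_curve_aut_set[of "1/t" _ "e * t^4"] \<open>e * t^4 * (1/t)^4 = e\<close> assms by auto
  show "twist (1/t) (twist t M) = M" for M by (rule twist_twist_inverse[OF assms])
  show "twist t (twist (1/t) M) = M" for M using twist_twist_inverse[of "1/t" M] assms by simp
qed

lemma twist_iso:
  fixes t :: "'k::field"
  assumes "t \<noteq> 0"
  shows "twist t \<in> iso (curve_aut_group (quintic (e * t^4))) (curve_aut_group (quintic e))"
proof (rule isoI)
  show "bij_betw (twist t) (carrier (curve_aut_group (quintic (e * t^4))))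
      (carrier (curve_aut_group (quintic e)))"
    unfolding curve_aut_group_def using bij_betw_twist[OF assms] by simp
  then show "twist t \<in> hom (curve_aut_group (quintic (e * t^4))) (curve_aut_group (quintic e))"
    unfolding hom_def curve_aut_group_def using twist_mult[OF assms] by (auto dest: bij_betwE)
qed

lemma curve_aut_set_plus_eq_twist_minus:
  fixes z :: "'k::field"
  assumes "z^4 = -1"
  shows "curve_aut_set f_plus = twist (1/z) ` curve_aut_set f_minus"
    and "inj_on (twist (1/z)) (curve_aut_set f_minus)"
proof -
  have "z \<noteq> 0" "1 * (1/z)^4 = -1" using assms by (auto simp: power_one_over)
  then have "bij_betw (twist (1/z)) (curve_aut_set f_minus) (curve_aut_set f_plus)"
    using bij_betw_twist[of "1/z" 1] by (simp add: f_plus_eq_quintic f_minus_eq_quintic)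
  then show "curve_aut_set f_plus = twist (1/z) ` curve_aut_set f_minus"
    and "inj_on (twist (1/z)) (curve_aut_set f_minus)"
    by (simp_all add: bij_betw_def)
qed

section \<open>Passing to the algebraic closure\<close>

lemma mat2_map_mult: "mat2_map h (mat2_mult M N) = mat2_mult (mat2_map h M) (mat2_map h N)"
  if "\<And>x y. h (x + y) = h x + h y" "\<And>x y. h (x * y) = h x * h y"
  unfolding mat2_map_def mat2_mult_def by (cases M; cases N) (simp add: that)

lemma inj_mat2_map: "inj h \<Longrightarrow> inj (mat2_map h)"
  unfolding mat2_map_def by (rule injI) (auto split: prod.splits dest: injD)

lemma map_poly_to_ac_quintic: "map_poly to_ac (quintic e) = quintic (to_ac e)"
  unfolding quintic_def by (simp add: map_poly_pCons)

lemma mat2_map_to_ac_iso: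
  fixes f :: "'k::field poly"
  assumes "mat2_map to_ac ` curve_aut_set f = carrier (Aut_bar f)"
  shows "mat2_map to_ac \<in> iso (curve_aut_group f) (Aut_bar f)"
proof (rule isoI)
  show "bij_betw (mat2_map to_ac) (carrier (curve_aut_group f)) (carrier (Aut_bar f))"
    using assms inj_on_subset[OF inj_mat2_map[of to_ac]] unfolding bij_betw_def curve_aut_group_def
    by (simp add: inj_def)
  then show "mat2_map to_ac \<in> hom (curve_aut_group f) (Aut_bar f)"
    unfolding hom_def Aut_bar_def curve_aut_group_def
    by (auto simp: mat2_map_mult dest: bij_betwE)
qed

lemma curve_aut_group_plus_iso_Aut_bar_minus:
  fixes z :: "'k::field"
  assumes z: "z^4 = -1"
    and defined_over:
      "mat2_map to_ac ` curve_aut_set f_plus = carrier (Aut_bar (f_plus :: 'k poly))"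
  shows "curve_aut_group (f_plus :: 'k poly) \<cong> Aut_bar (f_minus :: 'k poly)"
proof -
  have "to_ac z \<noteq> 0" "- 1 * to_ac z ^ 4 = 1" using z by (auto simp flip: to_ac_power)
  have "curve_aut_group (f_plus :: 'k poly) \<cong> Aut_bar (f_plus :: 'k poly)"
    using mat2_map_to_ac_iso[OF defined_over] by (rule is_isoI)
  also have "Aut_bar (f_plus :: 'k poly) = curve_aut_group (quintic (- 1 * to_ac z ^ 4))"
    unfolding Aut_bar_def f_plus_eq_quintic map_poly_to_ac_quintic \<open>- 1 * to_ac z ^ 4 = 1\<close> by simp
  also have "\<dots> \<cong> curve_aut_group (quintic (- 1 :: 'k alg_closure))"
    using twist_iso[OF \<open>to_ac z \<noteq> 0\<close>] by (rule is_isoI)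
  also have "curve_aut_group (quintic (- 1 :: 'k alg_closure)) = Aut_bar (f_minus :: 'k poly)"
    unfolding Aut_bar_def f_minus_eq_quintic map_poly_to_ac_quintic by simp
  finally show ?thesis .
qed

lemma mat2_map_twist: "mat2_map to_ac (twist t M) = twist (to_ac t) (mat2_map to_ac M)"
  unfolding mat2_map_def twist_def by (cases M) simp

lemma carrier_Aut_bar_f_plus: "carrier (Aut_bar (f_plus :: 'k::field poly)) = curve_aut_set f_plus"
  by (simp add: Aut_bar_def curve_aut_group_def f_plus_eq_quintic map_poly_to_ac_quintic)

section \<open>Eighth roots of unity\<close>

lemma primitive_8th_root_facts:
  fixes z :: "'k::field"
  assumes "z^4 = -1"
  shows "z \<noteq> 0" "z^8 = 1" "(z - z^3)^2 = 2"
  using assms by auto (Groebner_Basis.algebra+)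

lemma power_primitive_8th_root_neq_1:
  fixes z :: "'k::field"
  assumes z: "z^4 = -1" and two: "(2::'k) \<noteq> 0" and m: "0 < m" "m < 8"
  shows "z^m \<noteq> 1"
proof
  assume zm: "z^m = 1"
  have neg1: "(-1::'k)^n = 1 \<longleftrightarrow> even n" for n
    using two by (simp add: minus_one_power_iff)
  have "(-1::'k)^m = (z^m)^4" by (simp flip: z power_mult add: mult.commute)
  then obtain n where n: "m = 2*n" using zm neg1 by auto
  have "(-1::'k)^n = (z^m)^2" by (simp flip: z power_mult add: n mult.commute)
  then have "even n" using zm neg1 by simp
  then have "m = 4" using n m by auto
  then show False using z zm two by simp
qed

lemma inj_on_power_primitive_8th_root:
  fixes z :: "'k::field"
  assumes z: "z^4 = -1" and two: "(2::'k) \<noteq> 0"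
  shows "inj_on (\<lambda>k. z^k) {..<8}"
proof (rule inj_onI)
  have *: "z^j \<noteq> z^k" if "j < k" "k < 8" for j k
  proof
    assume "z^j = z^k"
    moreover have "z^k = z^j * z^(k - j)" using that by (simp flip: power_add)
    ultimately have "z^j * z^(k - j) = z^j * 1" by simp
    then show False
      using power_primitive_8th_root_neq_1[OF z two, of "k - j"] primitive_8th_root_facts(1)[OF z]
        that by simp
  qed
  show "j = k" if "j \<in> {..<8}" "k \<in> {..<8}" "z^j = z^k" for j k
    using *[of j k] *[of k j] that by (cases j k rule: linorder_cases) auto
qed

lemma eighth_root_of_unity_eq_power:
  fixes z x :: "'k::field"
  assumes z: "z^4 = -1" and x: "x^8 = 1"
  shows "\<exists>k<8. x = z^k"
proof -
  have "(x - 1)*(x - z)*(x - z^2)*(x - z^3)*(x - z^4)*(x - z^5)*(x - z^6)*(x - z^7) = x^8 - 1"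
    using z by Groebner_Basis.algebra
  then have "x \<in> {1, z, z^2, z^3, z^4, z^5, z^6, z^7}" using x by auto
  also have "\<dots> = (\<lambda>k. z^k) ` {0, 1, 2, 3, 4, 5, 6, 7}" by simp
  also have "{0, 1, 2, 3, 4, 5, 6, 7} = {..<8::nat}" by auto
  finally show ?thesis by auto
qed

lemma finite_field_power_card_minus_1:
  fixes x :: "'a::{field,finite}"
  assumes "x \<noteq> 0"
  shows "x ^ (card (UNIV::'a set) - 1) = 1"
proof -
  let ?U = "UNIV - {0::'a}"
  have "bij_betw (\<lambda>y. x*y) ?U ?U"
    by (rule bij_betwI[where g="\<lambda>y. y/x"]) (use assms in auto)
  then have "(\<Prod>y\<in>?U. y) = (\<Prod>y\<in>?U. x*y)"
    using prod.reindex_bij_betw[of "\<lambda>y. x*y" ?U ?U "\<lambda>y. y"] by simp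
  also have "\<dots> = x ^ card ?U * (\<Prod>y\<in>?U. y)" by (simp add: prod.distrib)
  finally have "(\<Prod>y\<in>?U. y) * (x ^ card ?U - 1) = 0" by (simp add: algebra_simps)
  moreover have "(\<Prod>y\<in>?U. y) \<noteq> 0" by simp
  ultimately show ?thesis by (simp add: card_Diff_singleton)
qed

lemma finite_field_exists_primitive_8th_root:
  assumes card: "card (UNIV :: 'a::{field,finite} set) = q" and dvd: "8 dvd (q - 1)"
  shows "\<exists>z::'a. z^4 = -1"
proof -
  obtain k where k: "q - 1 = 8*k" using dvd by blast
  have "q \<ge> 2" using card card_mono[of UNIV "{0::'a, 1}"] by simp
  then have "k > 0" using k by simp
  have "\<exists>x::'a. x \<noteq> 0 \<and> x^(4*k) \<noteq> 1"
  proof (rule ccontr)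
    assume "\<not> ?thesis"
    then have "UNIV - {0::'a} \<subseteq> {x. poly (monom 1 (4*k) - 1) x = 0}"
      by (auto simp: poly_monom)
    moreover have "coeff (monom (1::'a) (4*k) - 1) 0 = -1"
      using \<open>k > 0\<close> by (simp add: coeff_monom)
    then have "monom (1::'a) (4*k) - 1 \<noteq> 0" by (metis coeff_0 neg_0_equal_iff_equal one_neq_zero)
    moreover have "degree (monom (1::'a) (4*k) - 1) \<le> 4*k"
      by (intro degree_diff_le) (auto simp: degree_monom_le)
    ultimately have "card (UNIV - {0::'a}) \<le> 4*k"
      using card_mono[of "{x. poly (monom 1 (4*k) - 1) x = 0}" "UNIV - {0::'a}"]
        card_poly_roots_bound[of "monom (1::'a) (4*k) - 1"] by simp
    then show False using card k \<open>k > 0\<close> by (simp add: card_Diff_singleton)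
  qed
  then obtain x :: 'a where "x \<noteq> 0" "x^(4*k) \<noteq> 1" by blast
  moreover have "(x^(4*k))^2 = 1"
    using finite_field_power_card_minus_1[OF \<open>x \<noteq> 0\<close>] card k
    by (simp flip: power_mult add: mult.commute)
  ultimately have "x^(4*k) = -1" using power2_eq_iff[of "x^(4*k)" 1] by simp
  then have "(x^k)^4 = -1" by (simp flip: power_mult add: mult.commute)
  then show ?thesis by blast
qed

section \<open>The curve \<open>y\<^sup>2 = x\<^sup>5 + x\<close> outside characteristics 2 and 5\<close>

text \<open>Composition with the automorphism \<open>x \<mapsto> 1/x\<close> of \<open>y\<^sup>2 = x\<^sup>5 + x\<close>.\<close>
lemma quintic_aut_eqs_swap_rows:
  fixes a b c d :: "'k::field"
  shows "quintic_aut_eqs 1 a b c d \<longleftrightarrow> quintic_aut_eqs 1 c d a b"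
proof -
  have "(c*b - d*a)^2 = (a*d - b*c)^2" by Groebner_Basis.algebra
  then show ?thesis unfolding quintic_aut_eqs_def by (simp add: algebra_simps)
qed

lemma root_of_x9_eq_x:
  fixes a :: "'k::field"
  assumes "a \<noteq> 0" "(a^3)^3 = a"
  shows "a^8 = 1"
proof -
  have "a * a^8 = a * 1" using assms(2) by (simp flip: power_mult power_Suc)
  then show ?thesis using assms(1) by simp
qed

lemma quintic_plus_aut_eqs_upper_triangular:
  fixes a b d :: "'k::field"
  assumes five: "(5::'k) \<noteq> 0" and eqs: "quintic_aut_eqs 1 a b 0 d" and det: "a*d \<noteq> 0"
  shows "b = 0 \<and> d = a^3 \<and> a^8 = 1"
proof -
  from eqs have E1: "5*a*b^4*d + a*d^5 - (a*d)^2 = 0"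
    and E4: "5*a^4*b*d = 0" and E5: "a^5*d - (a*d)^2 = 0"
    unfolding quintic_aut_eqs_def by auto
  have "a \<noteq> 0" "d \<noteq> 0" using det by auto
  have b: "b = 0" using E4 five \<open>a \<noteq> 0\<close> \<open>d \<noteq> 0\<close> by simp
  have "a^2*d*(a^3 - d) = 0" using E5 by Groebner_Basis.algebra
  then have d: "d = a^3" using \<open>a \<noteq> 0\<close> \<open>d \<noteq> 0\<close> by simp
  have "a^2*d^2*(d^3 - a) = 0" using E1 b by Groebner_Basis.algebra
  then have "(a^3)^3 = a" using \<open>a \<noteq> 0\<close> \<open>d \<noteq> 0\<close> d by simp
  then show ?thesis using b d root_of_x9_eq_x \<open>a \<noteq> 0\<close> by blast
qed

lemma quintic_plus_aut_eqs_generic: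
  fixes a b c d :: "'k::field"
  assumes two: "(2::'k) \<noteq> 0" and five: "(5::'k) \<noteq> 0"
    and eqs: "quintic_aut_eqs 1 a b c d" and det: "a*d - b*c \<noteq> 0" and "a \<noteq> 0" "c \<noteq> 0"
  shows "c^4 = -(a^4) \<and> d = -2*a^3 \<and> b*c = 2*a^4 \<and> 16*a^8 = 1"
proof -
  from eqs have E0: "b^5*d + b*d^5 = 0" and
    E1: "b^5*c + 5*a*b^4*d + (a*d^5 + 5*b*c*d^4) - (a*d-b*c)^2 = 0" and
    E4: "10*a^3*b^2*c + 5*a^4*b*d + (10*a*c^3*d^2 + 5*b*c^4*d) = 0" and
    E5: "5*a^4*b*c + a^5*d + (5*a*c^4*d + b*c^5) - (a*d-b*c)^2 = 0" and
    E6: "a^5*c + a*c^5 = 0"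
    unfolding quintic_aut_eqs_def by auto
  have ten: "(10::'k) \<noteq> 0" and four: "(4::'k) \<noteq> 0"
    using two five by (metis mult_eq_0_iff num_double numeral_times_numeral)+
  have "a*c*(a^4 + c^4) = 0" using E6 by Groebner_Basis.algebra
  then have c4: "c^4 = -(a^4)" using \<open>a \<noteq> 0\<close> \<open>c \<noteq> 0\<close> by (simp add: eq_neg_iff_add_eq_0 add.commute)
  have "b \<noteq> 0" "d \<noteq> 0"
    using E4 det ten \<open>a \<noteq> 0\<close> \<open>c \<noteq> 0\<close> by auto
  have "b*d*(b^4 + d^4) = 0" using E0 by Groebner_Basis.algebra
  then have d4: "d^4 = -(b^4)" using \<open>b \<noteq> 0\<close> \<open>d \<noteq> 0\<close> by (simp add: eq_neg_iff_add_eq_0 add.commute)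
  have "10*a*c*(a^2*b^2 + c^2*d^2) = 0" using E4 c4 by Groebner_Basis.algebra
  then have "a^2*b^2 + c^2*d^2 = 0" using \<open>a \<noteq> 0\<close> \<open>c \<noteq> 0\<close> ten by simp
  then have "c^2*((a*d - b*c)*(a*d + b*c)) = 0" using c4 by Groebner_Basis.algebra
  then have adbc: "a*d = -(b*c)" using \<open>c \<noteq> 0\<close> det by (simp add: eq_neg_iff_add_eq_0)
  have "4*a^2*d*(2*a^3 + d) = 0" using E5 c4 adbc by Groebner_Basis.algebra
  then have d: "d = -2*a^3"
    using \<open>a \<noteq> 0\<close> \<open>d \<noteq> 0\<close> four by (simp add: eq_neg_iff_add_eq_0 add.commute)
  have "4*a*d*(2*b^4 - a*d) = 0" using E1 d4 adbc by Groebner_Basis.algebra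
  then have "2*b^4 = a*d" using \<open>a \<noteq> 0\<close> \<open>d \<noteq> 0\<close> four by simp
  then have b4: "b^4 = -(a^4)" using d two by Groebner_Basis.algebra
  have bc: "b*c = 2*a^4" using adbc d by Groebner_Basis.algebra
  have "a^8 * (16*a^8 - 1) = 0" using b4 c4 bc by Groebner_Basis.algebra
  then have "16*a^8 = 1" using \<open>a \<noteq> 0\<close> by simp
  then show ?thesis using c4 d bc by simp
qed

lemma quintic_plus_aut_eqs_cases:
  fixes a b c d :: "'k::field"
  assumes two: "(2::'k) \<noteq> 0" and five: "(5::'k) \<noteq> 0"
    and eqs: "quintic_aut_eqs 1 a b c d" and det: "a*d - b*c \<noteq> 0"
  shows "(b = 0 \<and> c = 0 \<and> d = a^3 \<and> a^8 = 1) \<or> (a = 0 \<and> d = 0 \<and> b = c^3 \<and> c^8 = 1) \<or>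
    (a \<noteq> 0 \<and> c^4 = -(a^4) \<and> d = -2*a^3 \<and> b*c = 2*a^4 \<and> 16*a^8 = 1)"
proof -
  consider "c = 0" | "a = 0" | "a \<noteq> 0" "c \<noteq> 0" by blast
  then show ?thesis
  proof cases
    case 1
    then show ?thesis
      using quintic_plus_aut_eqs_upper_triangular[OF five] eqs det by auto
  next
    case 2
    then have "quintic_aut_eqs 1 c d 0 b" "c*b \<noteq> 0"
      using eqs det quintic_aut_eqs_swap_rows[of 0 b c d] by auto
    then show ?thesis
      using quintic_plus_aut_eqs_upper_triangular[OF five] \<open>a = 0\<close> by auto
  next
    case 3
    then show ?thesis using quintic_plus_aut_eqs_generic[OF two five eqs det] by auto
  qed
qed

definition quintic_plus_generic_aut :: "'k::field \<Rightarrow> 'k \<Rightarrow> 'k mat2" where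
  "quintic_plus_generic_aut t a = (a, -2*a^3*t^3, t*a, -2*a^3)"

lemma quintic_aut_eqs_plus_diagonal: "a^8 = 1 \<Longrightarrow> quintic_aut_eqs 1 a 0 0 (a^3)"
  for a :: "'k::field"
  unfolding quintic_aut_eqs_def by (simp; Groebner_Basis.algebra)

lemma quintic_aut_eqs_plus_antidiagonal: "c^8 = 1 \<Longrightarrow> quintic_aut_eqs 1 0 (c^3) c 0"
  for c :: "'k::field"
  unfolding quintic_aut_eqs_def by (simp; Groebner_Basis.algebra)

lemma quintic_aut_eqs_plus_generic:
  fixes t a :: "'k::field"
  assumes "t^4 = -1" "16*a^8 = 1"
  shows "case quintic_plus_generic_aut t a of (a, b, c, d) \<Rightarrow> quintic_aut_eqs 1 a b c d"
  unfolding quintic_plus_generic_aut_def quintic_aut_eqs_def using assms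
  by (simp; intro conjI; Groebner_Basis.algebra)

lemma quintic_plus_generic_aut_param:
  fixes z a b c d :: "'k::field"
  assumes two: "(2::'k) \<noteq> 0" and z: "z^4 = -1"
    and "a \<noteq> 0" "c^4 = -(a^4)" "d = -2*a^3" "b*c = 2*a^4" "16*a^8 = 1"
  shows "\<exists>j<4. \<exists>m<8. (a, b, c, d) = quintic_plus_generic_aut (z^(2*j+1)) (z^m / (z - z^3))"
proof -
  note z_facts = primitive_8th_root_facts[OF z]
  define t where "t = c / a"
  have c: "c = t * a" and t4: "t^4 = -1"
    using assms(3,4) by (simp_all add: t_def power_divide)
  have "a * (b*t - 2*a^3) = 0" using assms(6) c by Groebner_Basis.algebra
  then have b: "b = -2*a^3*t^3" using assms(3) t4 by simp Groebner_Basis.algebra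
  have "t^8 = (t^4)^2" by (simp flip: power_mult)
  then obtain k where k: "k < 8" "t = z^k"
    using eighth_root_of_unity_eq_power[OF z, of t] t4 by auto
  have "odd k"
  proof
    assume "even k"
    then obtain i where "k = 2*i" by blast
    then have "t^4 = (z^8)^i" using \<open>t = z^k\<close> by (simp flip: power_mult add: mult.commute)
    then show False using t4 two z_facts(2) by simp
  qed
  then obtain j where "k = 2*j+1" by (rule oddE)
  with k have j: "j < 4" "t = z^(2*j+1)" by simp_all
  have "(a * (z - z^3))^8 = a^8 * ((z - z^3)^2)^4"
    by (simp add: power_mult_distrib flip: power_mult)
  then have "(a * (z - z^3))^8 = 1" using assms(7) z_facts(3) by (simp add: mult.commute)
  then obtain m where m: "m < 8" "a * (z - z^3) = z^m"
    using eighth_root_of_unity_eq_power[OF z] by blast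
  have "z - z^3 \<noteq> 0" using z_facts(3) two by auto
  with m have "a = z^m / (z - z^3)" by (simp add: field_simps)
  then show ?thesis
    using b c assms(5) j m(1) unfolding quintic_plus_generic_aut_def by auto
qed

text \<open>Since \<open>(z - z\<^sup>3)\<^sup>2 = 2\<close>, \<open>z\<^sup>m / (z - z\<^sup>3)\<close> runs through the roots of \<open>16 a\<^sup>8 = 1\<close> and
  \<open>z\<^sup>2\<^sup>j\<^sup>+\<^sup>1\<close> through those of \<open>t\<^sup>4 = -1\<close>.\<close>
definition quintic_plus_auts :: "'k::field \<Rightarrow> 'k mat2 set" where
  "quintic_plus_auts z =
     (\<lambda>k. (z^k, 0, 0, (z^k)^3)) ` {..<8} \<union> (\<lambda>k. (0, (z^k)^3, z^k, 0)) ` {..<8} \<union>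
     (\<lambda>(j, m). quintic_plus_generic_aut (z^(2*j+1)) (z^m / (z - z^3))) ` ({..<4} \<times> {..<8})"

lemma curve_aut_set_plus_subset_quintic_plus_auts:
  fixes z :: "'k::field"
  assumes two: "(2::'k) \<noteq> 0" and five: "(5::'k) \<noteq> 0" and z: "z^4 = -1"
  shows "curve_aut_set f_plus \<subseteq> quintic_plus_auts z"
proof
  fix M :: "'k mat2"
  assume "M \<in> curve_aut_set f_plus"
  then obtain a b c d where M: "M = (a, b, c, d)" and det: "a*d - b*c \<noteq> 0"
    and eqs: "quintic_aut_eqs 1 a b c d"
    by (cases M) (auto simp: f_plus_eq_quintic mem_curve_aut_set_quintic)
  from quintic_plus_aut_eqs_cases[OF two five eqs det] consider
      "b = 0" "c = 0" "d = a^3" "a^8 = 1" | "a = 0" "d = 0" "b = c^3" "c^8 = 1"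
    | "a \<noteq> 0" "c^4 = -(a^4)" "d = -2*a^3" "b*c = 2*a^4" "16*a^8 = 1"
    by blast
  then show "M \<in> quintic_plus_auts z"
  proof cases
    case 1
    then show ?thesis
      using eighth_root_of_unity_eq_power[OF z, of a] unfolding M quintic_plus_auts_def by auto
  next
    case 2
    then show ?thesis
      using eighth_root_of_unity_eq_power[OF z, of c] unfolding M quintic_plus_auts_def by auto
  next
    case 3
    then obtain j m where "j < 4" "m < 8"
      and "M = quintic_plus_generic_aut (z^(2*j+1)) (z^m / (z - z^3))"
      using quintic_plus_generic_aut_param[OF two z] M by blast
    then show ?thesis
      unfolding quintic_plus_auts_def by (intro UnI2 rev_image_eqI[of "(j, m)"]) auto
  qed
qed

lemma quintic_plus_auts_subset_curve_aut_set_plus: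
  fixes z :: "'k::field"
  assumes two: "(2::'k) \<noteq> 0" and z: "z^4 = -1"
  shows "quintic_plus_auts z \<subseteq> curve_aut_set f_plus"
proof -
  note z_facts = primitive_8th_root_facts[OF z]
  have root: "(z^k)^8 = 1" for k
  proof -
    have "(z^k)^8 = (z^8)^k" by (simp flip: power_mult add: mult.commute)
    then show ?thesis using z_facts(2) by simp
  qed
  have diagonal: "(z^k, 0, 0, (z^k)^3) \<in> curve_aut_set f_plus"
    and antidiagonal: "(0, (z^k)^3, z^k, 0) \<in> curve_aut_set f_plus" for k
    using quintic_aut_eqs_plus_diagonal[OF root] quintic_aut_eqs_plus_antidiagonal[OF root]
      z_facts(1) by (simp_all add: f_plus_eq_quintic mem_curve_aut_set_quintic)
  have generic: "quintic_plus_generic_aut (z^(2*j+1)) (z^m / (z - z^3)) \<in> curve_aut_set f_plus"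
    for j m
  proof -
    define t where "t = z^(2*j+1)"
    define a where "a = z^m / (z - z^3)"
    have "t^4 = z^((2*j+1)*4)" unfolding t_def by (rule power_mult[symmetric])
    also have "(2*j+1)*4 = 8*j + 4" by simp
    also have "z^(8*j + 4) = (z^8)^j * z^4" by (simp add: power_add power_mult)
    finally have t4: "t^4 = -1" using z_facts(2) z by simp
    have "z - z^3 \<noteq> 0" using z_facts(3) two by auto
    have "(z - z^3)^8 = ((z - z^3)^2)^4" by (simp flip: power_mult)
    then have "(z - z^3)^8 = 16" using z_facts(3) by simp
    moreover have "(16::'k) \<noteq> 0" using two by (metis mult_eq_0_iff num_double numeral_times_numeral)
    ultimately have a8: "16*a^8 = 1" unfolding a_def using root[of m] by (simp add: power_divide)
    have "a \<noteq> 0" unfolding a_def using z_facts two by auto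
    moreover have "a * (-2*a^3) - (-2*a^3*t^3) * (t*a) = -4*a^4" using t4 by Groebner_Basis.algebra
    moreover have "(4::'k) \<noteq> 0" using two by (metis mult_eq_0_iff num_double numeral_times_numeral)
    ultimately show ?thesis
      using quintic_aut_eqs_plus_generic[OF t4 a8]
      unfolding t_def a_def quintic_plus_generic_aut_def
      by (simp add: f_plus_eq_quintic mem_curve_aut_set_quintic)
  qed
  show ?thesis unfolding quintic_plus_auts_def using diagonal antidiagonal generic by auto
qed

lemma curve_aut_set_plus_eq_quintic_plus_auts:
  fixes z :: "'k::field"
  assumes "(2::'k) \<noteq> 0" "(5::'k) \<noteq> 0" "z^4 = -1"
  shows "curve_aut_set f_plus = quintic_plus_auts z"
  using curve_aut_set_plus_subset_quintic_plus_auts[OF assms]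
    quintic_plus_auts_subset_curve_aut_set_plus[OF assms(1,3)] by (rule antisym)

lemma card_quintic_plus_auts:
  fixes z :: "'k::field"
  assumes two: "(2::'k) \<noteq> 0" and z: "z^4 = -1"
  shows "card (quintic_plus_auts z) = 48"
proof -
  note z_facts = primitive_8th_root_facts[OF z]
  note inj_power = inj_on_power_primitive_8th_root[OF z two]
  have "z - z^3 \<noteq> 0" using z_facts(3) two by auto
  let ?A = "(\<lambda>k. (z^k, 0::'k, 0::'k, (z^k)^3)) ` {..<8}"
  let ?B = "(\<lambda>k. (0::'k, (z^k)^3, z^k, 0::'k)) ` {..<8}"
  define gen where "gen = (\<lambda>(j, m). quintic_plus_generic_aut (z^(2*j+1)) (z^m / (z - z^3)))"
  let ?C = "gen ` ({..<4::nat} \<times> {..<8::nat})"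
  have "card ?A = 8" "card ?B = 8"
    using inj_power by (auto simp: card_image inj_on_def)
  moreover have "card ?C = 32"
  proof (subst card_image)
    show "inj_on gen ({..<4} \<times> {..<8})"
    proof (rule inj_onI, clarify, unfold gen_def prod.case)
      fix j m j' m' :: nat
      assume jm: "j < 4" "m < 8" "j' < 4" "m' < 8" and
        eq: "quintic_plus_generic_aut (z^(2*j+1)) (z^m / (z - z^3)) =
          quintic_plus_generic_aut (z^(2*j'+1)) (z^m' / (z - z^3))"
      then have "z^m = z^m'"
        using \<open>z - z^3 \<noteq> 0\<close> by (simp add: quintic_plus_generic_aut_def divide_cancel_right)
      then have "m = m'" using inj_onD[OF inj_power] jm by simp
      moreover from eq have "z^(2*j+1) = z^(2*j'+1)"
        using \<open>z - z^3 \<noteq> 0\<close> z_facts(1) \<open>m = m'\<close> by (simp add: quintic_plus_generic_aut_def)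
      then have "2*j+1 = 2*j'+1" by (rule inj_onD[OF inj_power]) (use jm in simp_all)
      ultimately show "j = j' \<and> m = m'" by simp
    qed
  qed simp
  moreover have "?A \<inter> ?B = {}" "(?A \<union> ?B) \<inter> ?C = {}"
    using z_facts(1) \<open>z - z^3 \<noteq> 0\<close> by (auto simp: gen_def quintic_plus_generic_aut_def)
  ultimately show ?thesis
    unfolding quintic_plus_auts_def gen_def[symmetric] by (simp add: card_Un_disjoint)
qed

lemma mat2_map_to_ac_quintic_plus_auts:
  "mat2_map to_ac ` quintic_plus_auts (z::'k::field) = quintic_plus_auts (to_ac z)"
  unfolding quintic_plus_auts_def image_Un image_image
  by (simp add: mat2_map_def quintic_plus_generic_aut_def case_prod_beta)

lemma curve_aut_set_plus_char_not_2_5: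
  fixes z :: "'k::field"
  assumes "(2::'k) \<noteq> 0" "(5::'k) \<noteq> 0" "z^4 = -1"
  shows "mat2_map to_ac ` curve_aut_set f_plus = carrier (Aut_bar (f_plus :: 'k poly))"
    and "card (curve_aut_set (f_plus :: 'k poly)) = 48"
proof -
  have closure: "(2::'k alg_closure) \<noteq> 0" "(5::'k alg_closure) \<noteq> 0" "to_ac z ^ 4 = -1"
    using assms by (metis to_ac_numeral to_ac_eq_0_iff, metis to_ac_numeral to_ac_eq_0_iff,
        simp flip: to_ac_power)
  show "mat2_map to_ac ` curve_aut_set f_plus = carrier (Aut_bar (f_plus :: 'k poly))"
    unfolding carrier_Aut_bar_f_plus curve_aut_set_plus_eq_quintic_plus_auts[OF assms]
      curve_aut_set_plus_eq_quintic_plus_auts[OF closure]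
    by (rule mat2_map_to_ac_quintic_plus_auts)
  show "card (curve_aut_set (f_plus :: 'k poly)) = 48"
    using curve_aut_set_plus_eq_quintic_plus_auts[OF assms] card_quintic_plus_auts[OF assms(1,3)]
    by simp
qed

section \<open>The curve \<open>y\<^sup>2 = x\<^sup>5 - x\<close> in characteristic 5\<close>

lemma CHAR_5_numeral_5: "CHAR('k::field) = 5 \<Longrightarrow> (5::'k) = 0"
  by (metis of_nat_CHAR of_nat_numeral)

lemma CHAR_5_of_nat_inj:
  fixes m n :: nat
  assumes "CHAR('k::field) = 5" "m < 5" "n < 5" "(of_nat m :: 'k) = of_nat n"
  shows "m = n"
  using assms of_nat_eq_iff_char_dvd[of m n, where 'a='k]
    of_nat_eq_iff_char_dvd[of n m, where 'a='k]
  by (cases m n rule: linorder_cases) (auto dest: dvd_imp_le)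

lemma CHAR_5_of_nat_neq_0: "CHAR('k::field) = 5 \<Longrightarrow> 0 < n \<Longrightarrow> n < 5 \<Longrightarrow> (of_nat n :: 'k) \<noteq> 0"
  by (simp add: of_nat_eq_0_iff_char_dvd) (auto dest: dvd_imp_le)

lemma CHAR_5_of_nat_mod_5:
  assumes "CHAR('k::field) = 5"
  shows "(of_nat (n mod 5) :: 'k) = of_nat n"
proof -
  have "(of_nat n :: 'k) = of_nat (n mod 5 + 5 * (n div 5))" by simp
  also have "\<dots> = of_nat (n mod 5) + 5 * of_nat (n div 5)"
    by (simp only: of_nat_add of_nat_mult of_nat_numeral)
  finally show ?thesis using CHAR_5_numeral_5[OF assms] by simp
qed

lemma CHAR_5_power_5_1_add:
  fixes x :: "'k::field"
  assumes "CHAR('k) = 5"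
  shows "(1 + x)^5 = 1 + x^5"
proof -
  have "(1 + x)^5 = 1 + x^5 + 5 * (x^4 + 2*x^3 + 2*x^2 + x)" by Groebner_Basis.algebra
  then show ?thesis using CHAR_5_numeral_5[OF assms] by simp
qed

lemma CHAR_5_of_nat_power_5: "CHAR('k::field) = 5 \<Longrightarrow> (of_nat n :: 'k)^5 = of_nat n"
  by (induction n) (simp_all add: CHAR_5_power_5_1_add)

lemma CHAR_5_fixed_by_power_5:
  fixes x :: "'k::field"
  assumes "CHAR('k) = 5" and "x^5 = x"
  shows "\<exists>n<5. x = of_nat n"
proof -
  have "x*(x - 1)*(x - 2)*(x - 3)*(x - 4) = x^5 - x + 5*(-2*x^4 + 7*x^3 - 10*x^2 + 5*x)"
    by Groebner_Basis.algebra
  then have "x*(x - 1)*(x - 2)*(x - 3)*(x - 4) = 0"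
    by (simp only: CHAR_5_numeral_5[OF assms(1)] assms(2) mult_zero_left add_0_right diff_self)
  then have "x \<in> of_nat ` {0, 1, 2, 3, 4}" by auto
  also have "{0, 1, 2, 3, 4} = {..<5::nat}" by auto
  finally show ?thesis by auto
qed

text \<open>Index \<open>n < 5\<close> stands for the point \<open>(1 : n)\<close> of \<open>\<bbbP>\<^sup>1(\<bbbF>\<^sub>5)\<close>, index 5 for \<open>(0 : 1)\<close>.\<close>
definition P1_F5_fst :: "nat \<Rightarrow> 'k::field" where
  "P1_F5_fst n = (if n < 5 then 1 else 0)"

definition P1_F5_snd :: "nat \<Rightarrow> 'k::field" where
  "P1_F5_snd n = (if n < 5 then of_nat n else 1)"

lemma P1_F5_power_5:
  "CHAR('k::field) = 5 \<Longrightarrow> (P1_F5_fst n :: 'k)^5 = P1_F5_fst n"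
  "CHAR('k::field) = 5 \<Longrightarrow> (P1_F5_snd n :: 'k)^5 = P1_F5_snd n"
  unfolding P1_F5_fst_def P1_F5_snd_def by (simp_all add: CHAR_5_of_nat_power_5)

lemma CHAR_5_proportional_to_P1_F5_point:
  fixes x y :: "'k::field"
  assumes "CHAR('k) = 5" and "x^5 * y = x * y^5" and "x \<noteq> 0 \<or> y \<noteq> 0"
  shows "\<exists>n<6. \<exists>l. l \<noteq> 0 \<and> x = l * P1_F5_fst n \<and> y = l * P1_F5_snd n"
proof (cases "x = 0")
  case True
  then show ?thesis
    using assms(3)
    by (intro exI[of _ 5] conjI exI[of _ y]) (simp_all add: P1_F5_fst_def P1_F5_snd_def)
next
  case False
  have "(y/x)^5 = y/x" using assms(2) False by (simp add: power_divide field_simps)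
  then obtain n where "n < 5" "y/x = of_nat n" using CHAR_5_fixed_by_power_5[OF assms(1)] by blast
  then show ?thesis using False
    by (intro exI[of _ n] conjI exI[of _ x]) (simp_all add: P1_F5_fst_def P1_F5_snd_def field_simps)
qed

lemma P1_F5_point_unique:
  fixes l l' :: "'k::field"
  assumes char: "CHAR('k) = 5" and "l \<noteq> 0" "l' \<noteq> 0" "n < 6" "n' < 6"
    and "l * P1_F5_fst n = l' * P1_F5_fst n'" "l * P1_F5_snd n = l' * P1_F5_snd n'"
  shows "l = l' \<and> n = n'"
proof (cases "n < 5")
  case True
  then have "n' < 5" "l = l'" using assms(2-6) by (auto simp: P1_F5_fst_def split: if_splits)
  then show ?thesis
    using assms(2,7) CHAR_5_of_nat_inj[OF char True \<open>n' < 5\<close>] True by (simp add: P1_F5_snd_def)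
next
  case False
  then have "\<not> n' < 5" using assms(3,6) by (auto simp: P1_F5_fst_def split: if_splits)
  then show ?thesis using False assms(4,5,7) by (simp add: P1_F5_snd_def)
qed

definition F5_mat :: "nat \<times> nat \<times> nat \<Rightarrow> 'k::field mat2" where
  "F5_mat = (\<lambda>(n0, n1, n2). (P1_F5_fst n0, of_nat n1, P1_F5_snd n0, of_nat n2))"

text \<open>The determinant of \<open>F5_mat n\<close> as a residue in \<open>{0..4}\<close>, computed in \<open>nat\<close> (the 25
  avoids truncated subtraction) so that \<open>card_PGL2_F5_index\<close> is decided by evaluation.\<close>
definition F5_det :: "nat \<times> nat \<times> nat \<Rightarrow> nat" where
  "F5_det = (\<lambda>(n0, n1, n2). if n0 < 5 then (n2 + 25 - n1 * n0) mod 5 else (5 - n1) mod 5)"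

lemma F5_det_less_5: "F5_det n < 5"
  unfolding F5_det_def by (auto split: prod.split)

definition PGL2_F5_index :: "(nat \<times> nat \<times> nat) set" where
  "PGL2_F5_index = Set.filter (\<lambda>n. F5_det n \<noteq> 0) ({..<6} \<times> {..<5} \<times> {..<5})"

lemma card_PGL2_F5_index: "card PGL2_F5_index = 120"
  unfolding PGL2_F5_index_def F5_det_def by code_simp

lemma of_nat_F5_det:
  assumes "CHAR('k::field) = 5" and "n \<in> {..<6} \<times> {..<5} \<times> {..<5}"
  shows "(of_nat (F5_det n) :: 'k) = mat2_det (F5_mat n)"
proof -
  obtain n0 n1 n2 where n: "n = (n0, n1, n2)" "n0 < 6" "n1 < 5" "n2 < 5" using assms(2) by auto
  have "n1 * n0 \<le> 4 * 4" if "n0 < 5" using n that by (intro mult_mono) auto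
  moreover have "(25::'k) = 5 * 5" by simp
  ultimately show ?thesis
    using CHAR_5_of_nat_mod_5[OF assms(1)] CHAR_5_numeral_5[OF assms(1)] n
    by (auto simp: F5_det_def F5_mat_def mat2_det_def P1_F5_fst_def P1_F5_snd_def of_nat_diff)
qed

lemma F5_mat_power_5:
  assumes "CHAR('k::field) = 5"
  shows "case (F5_mat n :: 'k mat2) of (a, b, c, d) \<Rightarrow> a^5 = a \<and> b^5 = b \<and> c^5 = c \<and> d^5 = d"
  using P1_F5_power_5[OF assms] CHAR_5_of_nat_power_5[OF assms]
  by (simp add: F5_mat_def split: prod.split)

lemma CHAR_5_quintic_minus_aut_eqs_iff:
  fixes a b c d :: "'k::field"
  assumes "CHAR('k) = 5"
  shows "quintic_aut_eqs (-1) a b c d \<longleftrightarrow>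
    b^5*d = b*d^5 \<and> b^5*c - a*d^5 = -((a*d - b*c)^2) \<and>
    a^5*d - b*c^5 = (a*d - b*c)^2 \<and> a^5*c = a*c^5"
proof -
  have "(10::'k) = 2 * 5" by simp
  then have "(5::'k) = 0" "(10::'k) = 0" using CHAR_5_numeral_5[OF assms] by simp_all
  then show ?thesis unfolding quintic_aut_eqs_def by (auto simp: algebra_simps)
qed

definition mat2_smult :: "'k::field \<Rightarrow> 'k mat2 \<Rightarrow> 'k mat2" where
  "mat2_smult l M = (case M of (a, b, c, d) \<Rightarrow> (l*a, l*b, l*c, l*d))"

lemma mat2_det_smult: "mat2_det (mat2_smult l M) = l^2 * mat2_det M"
  unfolding mat2_det_def mat2_smult_def by (cases M) (simp add: algebra_simps power2_eq_square)

lemma CHAR_5_quintic_minus_aut_eqs_smult: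
  fixes a b c d l :: "'k::field"
  assumes "CHAR('k) = 5" and "a^5 = a" "b^5 = b" "c^5 = c" "d^5 = d" and "l^2 = a*d - b*c"
  shows "quintic_aut_eqs (-1) (l*a) (l*b) (l*c) (l*d)"
proof -
  have "l^6 = (l^2)^3" by (simp flip: power_mult)
  then have l6: "l^6 = (a*d - b*c)^3" using assms(6) by simp
  have "(l*a)*(l*d) - (l*b)*(l*c) = l^2 * (a*d - b*c)" by Groebner_Basis.algebra
  moreover have "(l*b)^5*(l*d) = l^6 * (b^5*d)" "(l*b)*(l*d)^5 = l^6 * (b*d^5)"
    "(l*b)^5*(l*c) - (l*a)*(l*d)^5 = l^6 * (b^5*c - a*d^5)"
    "(l*a)^5*(l*d) - (l*b)*(l*c)^5 = l^6 * (a^5*d - b*c^5)"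
    "(l*a)^5*(l*c) = l^6 * (a^5*c)" "(l*a)*(l*c)^5 = l^6 * (a*c^5)"
    by Groebner_Basis.algebra+
  ultimately show ?thesis
    unfolding CHAR_5_quintic_minus_aut_eqs_iff[OF assms(1)] using assms(2-6) l6
    by simp Groebner_Basis.algebra
qed

lemma ratio_of_cube_relations:
  fixes l m D :: "'k::field"
  assumes "l \<noteq> 0" and "D \<noteq> 0" and "l^3 = m*D" and "m^3 = l*D"
  shows "\<exists>e. m = e*l \<and> e^4 = 1 \<and> l^2 = e*D"
proof (intro exI conjI)
  show "m = (m/l) * l" "l^2 = (m/l) * D"
    using assms(1,3) by (simp_all add: field_simps power3_eq_cube power2_eq_square)
  have "D * ((m/l)^4 - 1) = 0"
    using assms by (simp add: field_simps) Groebner_Basis.algebra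
  then show "(m/l)^4 = 1" using assms(2) by simp
qed

lemma CHAR_5_quintic_minus_aut_normal_form:
  fixes a b c d :: "'k::field"
  assumes char: "CHAR('k) = 5" and eqs: "quintic_aut_eqs (-1) a b c d" and det: "a*d - b*c \<noteq> 0"
  shows "\<exists>n \<in> {..<6} \<times> {..<5} \<times> {..<5}. \<exists>l.
    (a, b, c, d) = mat2_smult l (F5_mat n) \<and> l^2 = mat2_det (F5_mat n)"
proof -
  from eqs have E0: "b^5*d = b*d^5" and E1: "b^5*c - a*d^5 = -((a*d - b*c)^2)"
    and E5: "a^5*d - b*c^5 = (a*d - b*c)^2" and E6: "a^5*c = a*c^5"
    unfolding CHAR_5_quintic_minus_aut_eqs_iff[OF char] by auto
  obtain n0 l where n0: "n0 < 6" and "l \<noteq> 0" and ac: "a = l * P1_F5_fst n0" "c = l * P1_F5_snd n0"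
    using CHAR_5_proportional_to_P1_F5_point[OF char E6] det by force
  obtain k m where "m \<noteq> 0" and bd: "b = m * P1_F5_fst k" "d = m * P1_F5_snd k"
    using CHAR_5_proportional_to_P1_F5_point[OF char E0] det by force
  define p q r s :: 'k
    where "p = P1_F5_fst n0" and "q = P1_F5_snd n0" and "r = P1_F5_fst k" and "s = P1_F5_snd k"
  have F5: "p^5 = p" "q^5 = q" "r^5 = r" "s^5 = s"
    unfolding p_def q_def r_def s_def using P1_F5_power_5[OF char] by auto
  define D where "D = p*s - r*q"
  have det_eq: "a*d - b*c = l*m*D"
    unfolding D_def p_def q_def r_def s_def ac bd by Groebner_Basis.algebra
  then have "D \<noteq> 0" using det by auto
  have "a^5*d - b*c^5 = l^5*m*(p^5*s - r*q^5)" "b^5*c - a*d^5 = l*m^5*(r^5*q - p*s^5)"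
    unfolding p_def q_def r_def s_def ac bd by Groebner_Basis.algebra+
  then have "l^2*m*D*(l^3 - m*D) = 0" "l*m^2*D*(m^3 - l*D) = 0"
    using E1 E5 F5 unfolding det_eq D_def by Groebner_Basis.algebra+
  then have "l^3 = m*D" "m^3 = l*D" using \<open>l \<noteq> 0\<close> \<open>m \<noteq> 0\<close> \<open>D \<noteq> 0\<close> by simp_all
  \<comment> \<open>The ratio of the two scalars is a fourth root of unity, hence lies in \<open>\<bbbF>\<^sub>5\<close>.\<close>
  then obtain e where e: "m = e*l" "e^4 = 1" "l^2 = e*D"
    using ratio_of_cube_relations \<open>l \<noteq> 0\<close> \<open>D \<noteq> 0\<close> by blast
  have "e^5 = e" using e(2) by (simp add: eval_nat_numeral)
  then have "(e*r)^5 = e*r" "(e*s)^5 = e*s" using F5 by (simp_all add: power_mult_distrib)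
  then obtain n1 n2 where n1: "n1 < 5" "e*r = of_nat n1" and n2: "n2 < 5" "e*s = of_nat n2"
    using CHAR_5_fixed_by_power_5[OF char] by meson
  have "(a, b, c, d) = mat2_smult l (F5_mat (n0, n1, n2))"
    unfolding mat2_smult_def F5_mat_def ac bd e(1) using n1 n2 p_def q_def r_def s_def
    by (simp flip: n1(2) n2(2) add: ac_simps)
  moreover have "l^2 = p * of_nat n2 - of_nat n1 * q"
    unfolding e(3) D_def by (simp flip: n1(2) n2(2) add: algebra_simps)
  then have "l^2 = mat2_det (F5_mat (n0, n1, n2) :: 'k mat2)"
    by (simp add: mat2_det_def F5_mat_def p_def q_def)
  ultimately show ?thesis using n0 n1 n2 by blast
qed

lemma smult_F5_mat_unique:
  fixes l l' :: "'k::field"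
  assumes char: "CHAR('k) = 5"
    and bounds: "n \<in> {..<6} \<times> {..<5} \<times> {..<5}" "n' \<in> {..<6} \<times> {..<5} \<times> {..<5}"
    and "l \<noteq> 0" "l' \<noteq> 0" and eq: "mat2_smult l (F5_mat n) = mat2_smult l' (F5_mat n')"
  shows "l = l' \<and> n = n'"
proof -
  obtain n0 n1 n2 n0' n1' n2' where n: "n = (n0, n1, n2)" "n' = (n0', n1', n2')"
    by (cases n, cases n') auto
  have "l * P1_F5_fst n0 = l' * P1_F5_fst n0'" "l * P1_F5_snd n0 = l' * P1_F5_snd n0'"
    using eq n by (simp_all add: mat2_smult_def F5_mat_def)
  then have "l = l'" "n0 = n0'"
    using P1_F5_point_unique[OF char \<open>l \<noteq> 0\<close> \<open>l' \<noteq> 0\<close>] bounds n by auto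
  moreover have "(of_nat n1 :: 'k) = of_nat n1'" "(of_nat n2 :: 'k) = of_nat n2'"
    using eq n \<open>l = l'\<close> \<open>l' \<noteq> 0\<close> by (simp_all add: mat2_smult_def F5_mat_def)
  then have "n1 = n1'" "n2 = n2'" using CHAR_5_of_nat_inj[OF char] bounds n by auto
  ultimately show ?thesis using n by simp
qed

text \<open>Square roots of 1, 2, 3, 4 in characteristic 5: \<open>(z - z\<^sup>3)\<^sup>2 = 2\<close> and \<open>3 = -2\<close>.\<close>
definition sqrt_F5 :: "'k::field \<Rightarrow> nat \<Rightarrow> 'k" where
  "sqrt_F5 z n =
     (if n = 1 then 1 else if n = 2 then z - z^3 else if n = 3 then (z - z^3) * z^2 else 2)"

lemma sqrt_F5_squared:
  fixes z :: "'k::field"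
  assumes char: "CHAR('k) = 5" and z: "z^4 = -1" and n: "0 < n" "n < 5"
  shows "(sqrt_F5 z n)^2 = of_nat n"
proof -
  have w2: "(z - z^3)^2 = 2" by (rule primitive_8th_root_facts(3)[OF z])
  have "((z - z^3) * z^2)^2 = 3 - 5"
    using w2 z by (simp add: power_mult_distrib flip: power_mult)
  then have "((z - z^3) * z^2)^2 = 3" using CHAR_5_numeral_5[OF char] by simp
  moreover have "n = 1 \<or> n = 2 \<or> n = 3 \<or> n = 4" using n by auto
  ultimately show ?thesis using w2 unfolding sqrt_F5_def by auto
qed

definition quintic_minus_auts_char5 :: "'k::field \<Rightarrow> 'k mat2 set" where
  "quintic_minus_auts_char5 z =
     (\<lambda>(n, neg). mat2_smult ((if neg then -1 else 1) * sqrt_F5 z (F5_det n)) (F5_mat n))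
       ` (PGL2_F5_index \<times> UNIV)"

lemma smult_F5_mat_mem_curve_aut_set_minus:
  fixes l :: "'k::field"
  assumes char: "CHAR('k) = 5" and n: "n \<in> {..<6} \<times> {..<5} \<times> {..<5}" "F5_det n \<noteq> 0"
    and l: "l^2 = of_nat (F5_det n)"
  shows "mat2_smult l (F5_mat n) \<in> curve_aut_set f_minus"
proof -
  obtain a b c d :: 'k where N: "F5_mat n = (a, b, c, d)" by (cases "F5_mat n :: 'k mat2")
  have det: "l^2 = a*d - b*c" using l of_nat_F5_det[OF char n(1)] N by (simp add: mat2_det_def)
  have "l^2 \<noteq> 0" using l n(2) CHAR_5_of_nat_neq_0[OF char] F5_det_less_5 by simp
  then show ?thesis
    using CHAR_5_quintic_minus_aut_eqs_smult[OF char _ _ _ _ det] F5_mat_power_5[OF char, of n]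
      N det mat2_det_smult[of l "F5_mat n"]
    by (simp add: mat2_smult_def f_minus_eq_quintic mem_curve_aut_set_quintic mat2_det_def)
qed

lemma curve_aut_set_minus_eq_char5:
  fixes z :: "'k::field"
  assumes char: "CHAR('k) = 5" and z: "z^4 = -1"
  shows "curve_aut_set f_minus = quintic_minus_auts_char5 z"
proof (intro equalityI subsetI)
  fix M :: "'k mat2"
  assume "M \<in> curve_aut_set f_minus"
  then obtain a b c d where M: "M = (a, b, c, d)" and det: "a*d - b*c \<noteq> 0"
    and eqs: "quintic_aut_eqs (-1) a b c d"
    by (cases M) (auto simp: f_minus_eq_quintic mem_curve_aut_set_quintic)
  obtain n l where n: "n \<in> {..<6} \<times> {..<5} \<times> {..<5}" and M_eq: "M = mat2_smult l (F5_mat n)"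
    and l: "l^2 = mat2_det (F5_mat n)"
    using CHAR_5_quintic_minus_aut_normal_form[OF char eqs det] M by blast
  have "mat2_det M = l^2 * l^2" unfolding M_eq mat2_det_smult l ..
  moreover have "mat2_det M \<noteq> 0" using det M by (simp add: mat2_det_def)
  ultimately have l2: "l^2 = of_nat (F5_det n)" "of_nat (F5_det n) \<noteq> (0::'k)"
    using l of_nat_F5_det[OF char n] by auto
  then have "F5_det n \<noteq> 0" by (metis of_nat_0)
  then have "l^2 = (sqrt_F5 z (F5_det n))^2"
    using l2 sqrt_F5_squared[OF char z] F5_det_less_5 by simp
  then obtain neg where "l = (if neg then -1 else 1) * sqrt_F5 z (F5_det n)"
    unfolding power2_eq_iff by (metis mult_1 mult_minus1)
  moreover have "n \<in> PGL2_F5_index" using n \<open>F5_det n \<noteq> 0\<close> by (simp add: PGL2_F5_index_def)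
  ultimately show "M \<in> quintic_minus_auts_char5 z"
    unfolding quintic_minus_auts_char5_def M_eq by (intro rev_image_eqI[of "(n, neg)"]) auto
next
  fix M :: "'k mat2"
  assume "M \<in> quintic_minus_auts_char5 z"
  then obtain n neg where n: "n \<in> PGL2_F5_index"
    and M: "M = mat2_smult ((if neg then -1 else 1) * sqrt_F5 z (F5_det n)) (F5_mat n)"
    unfolding quintic_minus_auts_char5_def by auto
  have "n \<in> {..<6} \<times> {..<5} \<times> {..<5}" "F5_det n \<noteq> 0" using n by (auto simp: PGL2_F5_index_def)
  moreover have "((if neg then -1 else 1) * sqrt_F5 z (F5_det n))^2 = of_nat (F5_det n)"
    using sqrt_F5_squared[OF char z] F5_det_less_5 \<open>F5_det n \<noteq> 0\<close> by (simp add: power_mult_distrib)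
  ultimately show "M \<in> curve_aut_set f_minus"
    unfolding M by (rule smult_F5_mat_mem_curve_aut_set_minus[OF char])
qed

lemma card_quintic_minus_auts_char5:
  fixes z :: "'k::field"
  assumes char: "CHAR('k) = 5" and z: "z^4 = -1"
  shows "card (quintic_minus_auts_char5 z) = 240"
proof -
  define sc :: "nat \<times> nat \<times> nat \<Rightarrow> bool \<Rightarrow> 'k"
    where "sc n neg = (if neg then -1 else 1) * sqrt_F5 z (F5_det n)" for n neg
  have sc: "sc n neg \<noteq> 0" if "n \<in> PGL2_F5_index" for n neg
  proof -
    have "0 < F5_det n" "F5_det n < 5" using that F5_det_less_5 by (auto simp: PGL2_F5_index_def)
    then have "(sc n neg)^2 = of_nat (F5_det n)"
      using sqrt_F5_squared[OF char z] by (simp add: sc_def power_mult_distrib)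
    then show "sc n neg \<noteq> 0"
      using CHAR_5_of_nat_neq_0[OF char \<open>0 < F5_det n\<close> \<open>F5_det n < 5\<close>] by auto
  qed
  have "(2::'k) \<noteq> 0" using CHAR_5_of_nat_neq_0[OF char, of 2] by simp
  define param where "param = (\<lambda>(n, neg). mat2_smult (sc n neg) (F5_mat n))"
  have "inj_on param (PGL2_F5_index \<times> UNIV)"
  proof (rule inj_onI)
    fix x y
    assume "x \<in> PGL2_F5_index \<times> UNIV" "y \<in> PGL2_F5_index \<times> UNIV" and eq: "param x = param y"
    then obtain n neg n' neg' where xy: "x = (n, neg)" "y = (n', neg')"
      and n: "n \<in> PGL2_F5_index" "n' \<in> PGL2_F5_index" by auto
    have "n \<in> {..<6} \<times> {..<5} \<times> {..<5}" "n' \<in> {..<6} \<times> {..<5} \<times> {..<5}"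
      using n by (simp_all add: PGL2_F5_index_def)
    from smult_F5_mat_unique[OF char this sc[OF n(1)] sc[OF n(2)]] eq xy param_def
    have "sc n neg = sc n' neg'" "n = n'" by simp_all
    then show "x = y"
      using xy sc[OF n(1)] \<open>(2::'k) \<noteq> 0\<close> by (auto simp: sc_def split: if_splits)
  qed
  then have "card (quintic_minus_auts_char5 z) = card (PGL2_F5_index \<times> (UNIV :: bool set))"
    unfolding quintic_minus_auts_char5_def sc_def param_def by (rule card_image)
  also have "\<dots> = 240" by (simp add: card_cartesian_product card_PGL2_F5_index)
  finally show ?thesis .
qed

lemma mat2_map_to_ac_quintic_minus_auts_char5:
  "mat2_map to_ac ` quintic_minus_auts_char5 (z::'k::field) = quintic_minus_auts_char5 (to_ac z)"
  unfolding quintic_minus_auts_char5_def image_image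
  by (rule image_cong)
    (auto simp: mat2_map_def mat2_smult_def F5_mat_def sqrt_F5_def P1_F5_fst_def P1_F5_snd_def)

lemma curve_aut_set_plus_char_5:
  fixes z :: "'k::field"
  assumes char: "CHAR('k) = 5" and z: "z^4 = -1"
  shows "mat2_map to_ac ` curve_aut_set f_plus = carrier (Aut_bar (f_plus :: 'k poly))"
    and "card (curve_aut_set (f_plus :: 'k poly)) = 240"
proof -
  have char': "CHAR('k alg_closure) = 5" and z': "to_ac z ^ 4 = -1"
    using char z by (simp, simp flip: to_ac_power)
  have "mat2_map to_ac ` curve_aut_set (f_plus :: 'k poly)
      = twist (1 / to_ac z) ` mat2_map to_ac ` quintic_minus_auts_char5 z"
    unfolding curve_aut_set_plus_eq_twist_minus(1)[OF z] curve_aut_set_minus_eq_char5[OF char z]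
      image_image mat2_map_twist by simp
  also have "\<dots> = curve_aut_set f_plus"
    unfolding mat2_map_to_ac_quintic_minus_auts_char5
      curve_aut_set_plus_eq_twist_minus(1)[OF z'] curve_aut_set_minus_eq_char5[OF char' z'] ..
  finally show "mat2_map to_ac ` curve_aut_set f_plus = carrier (Aut_bar (f_plus :: 'k poly))"
    unfolding carrier_Aut_bar_f_plus .
  show "card (curve_aut_set (f_plus :: 'k poly)) = 240"
    using card_image[OF curve_aut_set_plus_eq_twist_minus(2)[OF z]]
      card_quintic_minus_auts_char5[OF char z]
    unfolding curve_aut_set_plus_eq_twist_minus(1)[OF z] curve_aut_set_minus_eq_char5[OF char z]
    by simp
qed

theorem mainTheorem2:
  fixes p q :: nat
  assumes "prime p" and "odd p"
    and "CHAR('a::{field,finite}) = p" and "card (UNIV :: 'a set) = q"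
    and "8 dvd (q - 1)"
    and "\<exists>s::'a. s^2 = 2"
  shows "(p \<noteq> 3 \<and> p \<noteq> 5 \<longrightarrow>
            curve_aut_group (f_plus :: 'a poly) \<cong> Aut_bar (f_minus :: 'a poly)
          \<and> mat2_map to_ac ` curve_aut_set (f_plus :: 'a poly) = carrier (Aut_bar (f_plus :: 'a poly))
          \<and> Coset.order (curve_aut_group (f_plus :: 'a poly)) = 48)
       \<and> (p = 5 \<longrightarrow>
            curve_aut_group (f_plus :: 'a poly) \<cong> Aut_bar (f_minus :: 'a poly)
          \<and> mat2_map to_ac ` curve_aut_set (f_plus :: 'a poly) = carrier (Aut_bar (f_plus :: 'a poly))
          \<and> Coset.order (curve_aut_group (f_plus :: 'a poly)) = 240)"
proof -
  obtain z :: 'a where z: "z^4 = -1"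
    using finite_field_exists_primitive_8th_root[OF assms(4,5)] by blast
  have order:
    "Coset.order (curve_aut_group (f_plus :: 'a poly)) = card (curve_aut_set (f_plus :: 'a poly))"
    by (simp add: Coset.order_def curve_aut_group_def)
  have of_nat_eq_0: "(of_nat n :: 'a) = 0 \<longleftrightarrow> p dvd n" for n
    using assms(3) by (simp add: of_nat_eq_0_iff_char_dvd)
  have "(2::'a) \<noteq> 0"
    using of_nat_eq_0[of 2] assms(1,2) by (auto dest: primes_dvd_imp_eq[OF _ two_is_prime_nat])
  have "prime (5::nat)" by (simp add: prime_nat_iff' atLeastLessThan_nat_numeral)
  then have "(5::'a) \<noteq> 0" if "p \<noteq> 5"
    using of_nat_eq_0[of 5] that primes_dvd_imp_eq[OF assms(1)] by auto
  with \<open>(2::'a) \<noteq> 0\<close> z show ?thesis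
    using curve_aut_set_plus_char_not_2_5 curve_aut_set_plus_char_5[OF _ z] assms(3)
      curve_aut_group_plus_iso_Aut_bar_minus[OF z] order by auto
qed

end
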